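(* Let $V_0$ be a smooth function on an interval, $H_0=-\big(\frac{\mathrm d^2}{\mathrm dz^2}+V_0\big)$, and let $\psi_1,\dots,\psi_{N+1}$ be smooth functions with $H_0\psi_1=0$ and $H_0\psi_{j+1}=C_j\psi_j$ for $1\le j\le N$, where $C_j$ are nonzero constants. Set $\theta_0=1$, $\theta_j=Wr(\psi_1,\dots,\psi_j)$, and assume $\theta_j$ has no zeros for $1\le j\le N+1$. Then for each $1\le n\le N$, with $V_n=V_0+2(\log\theta_n)''$, both $\phi_n=\theta_{n+1}/\theta_n$ and $\phi_{n-1}^{-1}=\theta_{n-1}/\theta_n$ are annihilated by $\frac{\mathrm d^2}{\mathrm dz^2}+V_n$, and $$Wr(\phi_n,\phi_{n-1}^{-1})=C_n,\quad\text{equivalently}\quad \theta_{n-1}'\theta_{n+1}-\theta_{n-1}\theta_{n+1}'=C_n\,\theta_n^2 .$$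
   Context: $Wr(f_1,\dots,f_n)=\det\big(\frac{\mathrm d^{i-1}f_j}{\mathrm dz^{i-1}}\big)_{i,j=1}^n$ is the Wronskian and $'=\mathrm d/\mathrm dz$. *)

theory Defs
  imports "HOL-Analysis.Analysis" "Jordan_Normal_Form.Determinant"
begin

definition smooth_on :: "real set \<Rightarrow> (real \<Rightarrow> real) \<Rightarrow> bool" where
  "smooth_on I f \<longleftrightarrow> (\<forall>k. \<forall>x\<in>I. ((deriv ^^ k) f) differentiable (at x))"

definition Wr :: "(real \<Rightarrow> real) list \<Rightarrow> real \<Rightarrow> real" where
  "Wr fs z = det (Matrix.mat (length fs) (length fs) (\<lambda>(i,j). (deriv ^^ i) (fs ! j) z))"

end

(* For a nonvanishing solution p of p'' + V p = 0 the
   Darboux transformation A h = h' - (p'/p) h intertwines the Schroedinger operators: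
   (d^2 + V + 2 (log p)'') (A f) = A ((d^2 + V) f), a consequence of the Riccati equation
   satisfied by p'/p. Factoring psi_1 out of the Wronskian gives
   theta_(j+1) = psi_1 * Wr (A psi_2, ..., A psi_(j+1)), so passing to the transformed chain
   A psi_2, A psi_3, ... with potential V + 2 (log psi_1)'' lowers n by one while leaving the ratios
   theta_(n+1)/theta_n and the potential V_n unchanged; in the bilinear identity both sides pick up
   the factor psi_1^2. The case n = 1 is a direct computation. *)

theory Submission
  imports Defs
begin

lemma real_differentiable_iff_field_differentiable:
  fixes f :: "real \<Rightarrow> real"
  shows "f differentiable at x \<longleftrightarrow> f field_differentiable at x"
  by (simp add: field_differentiable_def real_differentiable_def)

lemma higher_deriv_cong_open:
  assumes "open I" "\<forall>x\<in>I. f x = g x" "x \<in> I"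
  shows "(deriv ^^ k) f x = (deriv ^^ k) g x"
  using assms(3)
proof (induction k arbitrary: x)
  case 0 then show ?case using assms(2) by simp
next
  case (Suc k)
  have "\<forall>\<^sub>F y in nhds x. (deriv ^^ k) f y = (deriv ^^ k) g y"
    using eventually_nhds_in_open[OF assms(1) Suc.prems] by (rule eventually_mono) (rule Suc.IH)
  then show ?case by (simp add: deriv_cong_ev)
qed

lemma deriv_cong_open:
  "open I \<Longrightarrow> \<forall>x\<in>I. f x = g x \<Longrightarrow> x \<in> I \<Longrightarrow> deriv f x = deriv g x"
  using higher_deriv_cong_open[of I f g x 1] by simp

lemma deriv2_cong_open:
  "open I \<Longrightarrow> \<forall>x\<in>I. f x = g x \<Longrightarrow> x \<in> I \<Longrightarrow> deriv (deriv f) x = deriv (deriv g) x"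
  using higher_deriv_cong_open[of I f g x 2] by (simp add: numeral_2_eq_2)

lemma differentiable_cong_open:
  assumes "open I" "\<forall>y\<in>I. f y = g y" "x \<in> I" "f differentiable at x"
  shows "g differentiable at x"
  using assms unfolding differentiable_def by (metis has_derivative_transform_within_open)

lemma funpow_deriv_Suc: "(deriv ^^ Suc k) f = (deriv ^^ k) (deriv f)"
  by (simp only: funpow_Suc_right o_def)

lemma higher_deriv_const: "(deriv ^^ Suc k) (\<lambda>x. c :: real) = (\<lambda>x. 0)"
  by (induction k) (simp_all del: funpow.simps add: funpow_deriv_Suc)

lemma smooth_onD: "smooth_on I f \<Longrightarrow> x \<in> I \<Longrightarrow> (deriv ^^ k) f differentiable at x"
  unfolding smooth_on_def by blast

lemma smooth_on_differentiable: "smooth_on I f \<Longrightarrow> x \<in> I \<Longrightarrow> f differentiable at x"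
  using smooth_onD[of I f x 0] by simp

lemma smooth_on_field_differentiable: "smooth_on I f \<Longrightarrow> x \<in> I \<Longrightarrow> f field_differentiable at x"
  using smooth_on_differentiable real_differentiable_iff_field_differentiable by blast

lemma smooth_on_deriv: "smooth_on I f \<Longrightarrow> smooth_on I (deriv f)"
  unfolding smooth_on_def by (metis funpow_deriv_Suc)

lemma smooth_on_higher_deriv: "smooth_on I f \<Longrightarrow> smooth_on I ((deriv ^^ k) f)"
  by (induction k) (auto intro: smooth_on_deriv)

text \<open>Closure of smoothness under products and inverses is proved by induction on the order of
  differentiability, which needs the finite-order notion.\<close>

definition differentiable_upto :: "nat \<Rightarrow> real set \<Rightarrow> (real \<Rightarrow> real) \<Rightarrow> bool" where
  "differentiable_upto n I f \<longleftrightarrow> (\<forall>k\<le>n. \<forall>x\<in>I. (deriv ^^ k) f differentiable at x)"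

lemma differentiable_upto_0: "differentiable_upto 0 I f \<longleftrightarrow> (\<forall>x\<in>I. f differentiable at x)"
  unfolding differentiable_upto_def by auto

lemma differentiable_upto_Suc:
  "differentiable_upto (Suc n) I f \<longleftrightarrow>
     (\<forall>x\<in>I. f differentiable at x) \<and> differentiable_upto n I (deriv f)"
  unfolding differentiable_upto_def
proof (intro iffI conjI allI impI ballI)
  fix k x assume "\<forall>k\<le>Suc n. \<forall>x\<in>I. (deriv ^^ k) f differentiable at x" "x \<in> I"
  then show "f differentiable at x" by (metis funpow_0 le0)
  assume "k \<le> n"
  with \<open>\<forall>k\<le>Suc n. _\<close> \<open>x \<in> I\<close> show "(deriv ^^ k) (deriv f) differentiable at x"
    by (metis Suc_le_mono funpow_deriv_Suc)
next
  fix k x assume "(\<forall>x\<in>I. f differentiable at x) \<and> (\<forall>k\<le>n. \<forall>x\<in>I. (deriv ^^ k) (deriv f) differentiable at x)"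
    "k \<le> Suc n" "x \<in> I"
  then show "(deriv ^^ k) f differentiable at x"
    by (cases k) (simp_all del: funpow.simps add: funpow_deriv_Suc)
qed
lemma differentiable_upto_SucD: "differentiable_upto (Suc n) I f \<Longrightarrow> differentiable_upto n I f"
  unfolding differentiable_upto_def by auto

lemma smooth_on_iff_differentiable_upto: "smooth_on I f \<longleftrightarrow> (\<forall>n. differentiable_upto n I f)"
  unfolding smooth_on_def differentiable_upto_def by auto

lemma differentiable_upto_cong:
  assumes "open I" "\<forall>x\<in>I. f x = g x" "differentiable_upto n I f"
  shows "differentiable_upto n I g"
  unfolding differentiable_upto_def
proof (intro allI impI ballI)
  fix k x assume "k \<le> n" "x \<in> I"
  moreover have "\<forall>y\<in>I. (deriv ^^ k) f y = (deriv ^^ k) g y"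
    using higher_deriv_cong_open[OF assms(1,2)] by blast
  ultimately show "(deriv ^^ k) g differentiable at x"
    using differentiable_cong_open[OF assms(1)] assms(3) unfolding differentiable_upto_def by blast
qed

lemma smooth_on_cong: "open I \<Longrightarrow> \<forall>x\<in>I. f x = g x \<Longrightarrow> smooth_on I f \<Longrightarrow> smooth_on I g"
  unfolding smooth_on_iff_differentiable_upto using differentiable_upto_cong by blast

lemma differentiable_upto_const: "differentiable_upto n I (\<lambda>x. c)"
  by (induction n arbitrary: c) (simp_all add: differentiable_upto_0 differentiable_upto_Suc)

lemma differentiable_upto_add:
  assumes "open I"
  shows "differentiable_upto n I f \<Longrightarrow> differentiable_upto n I g \<Longrightarrow>
    differentiable_upto n I (\<lambda>x. f x + g x)"
proof (induction n arbitrary: f g)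
  case 0 then show ?case by (auto simp: differentiable_upto_0)
next
  case (Suc n)
  then have d: "\<forall>x\<in>I. f differentiable at x" "\<forall>x\<in>I. g differentiable at x"
    by (auto simp: differentiable_upto_Suc)
  then have "\<forall>x\<in>I. deriv f x + deriv g x = deriv (\<lambda>x. f x + g x) x"
    by (simp add: real_differentiable_iff_field_differentiable)
  moreover have "differentiable_upto n I (\<lambda>x. deriv f x + deriv g x)"
    using Suc by (auto simp: differentiable_upto_Suc)
  ultimately have "differentiable_upto n I (deriv (\<lambda>x. f x + g x))"
    by (rule differentiable_upto_cong[OF assms])
  with d show ?case by (simp add: differentiable_upto_Suc)
qed

lemma differentiable_upto_mult:
  assumes "open I"
  shows "differentiable_upto n I f \<Longrightarrow> differentiable_upto n I g \<Longrightarrow>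
    differentiable_upto n I (\<lambda>x. f x * g x)"
proof (induction n arbitrary: f g)
  case 0 then show ?case by (auto simp: differentiable_upto_0)
next
  case (Suc n)
  then have d: "\<forall>x\<in>I. f differentiable at x" "\<forall>x\<in>I. g differentiable at x"
    by (auto simp: differentiable_upto_Suc)
  then have "\<forall>x\<in>I. f x * deriv g x + deriv f x * g x = deriv (\<lambda>x. f x * g x) x"
    by (simp add: real_differentiable_iff_field_differentiable)
  moreover have "differentiable_upto n I (\<lambda>x. f x * deriv g x + deriv f x * g x)"
    using Suc differentiable_upto_SucD
    by (intro differentiable_upto_add[OF assms]) (auto simp: differentiable_upto_Suc)
  ultimately have "differentiable_upto n I (deriv (\<lambda>x. f x * g x))"
    by (rule differentiable_upto_cong[OF assms])
  with d show ?case by (simp add: differentiable_upto_Suc)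
qed

lemma differentiable_upto_inverse:
  assumes "open I"
  shows "\<forall>x\<in>I. f x \<noteq> 0 \<Longrightarrow> differentiable_upto n I f \<Longrightarrow> differentiable_upto n I (\<lambda>x. inverse (f x))"
proof (induction n arbitrary: f)
  case 0 then show ?case
    by (auto simp: differentiable_upto_0 real_differentiable_iff_field_differentiable
        intro: field_differentiable_inverse)
next
  case (Suc n)
  then have df: "\<forall>x\<in>I. f field_differentiable at x"
    by (auto simp: differentiable_upto_Suc real_differentiable_iff_field_differentiable)
  then have "\<forall>x\<in>I. - deriv f x * (inverse (f x) * inverse (f x)) = deriv (\<lambda>x. inverse (f x)) x"
    using Suc.prems(1) by (simp add: field_simps power2_eq_square)
  moreover have "differentiable_upto n I (\<lambda>x. - deriv f x * (inverse (f x) * inverse (f x)))"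
  proof -
    have "differentiable_upto n I (\<lambda>x. - deriv f x)"
      using Suc.prems(2) differentiable_upto_mult[OF assms differentiable_upto_const[of n I "-1"]]
      by (simp add: differentiable_upto_Suc)
    moreover have "differentiable_upto n I (\<lambda>x. inverse (f x))"
      using Suc differentiable_upto_SucD by blast
    ultimately show ?thesis using differentiable_upto_mult[OF assms] by blast
  qed
  ultimately have "differentiable_upto n I (deriv (\<lambda>x. inverse (f x)))"
    by (rule differentiable_upto_cong[OF assms])
  with df Suc.prems(1) show ?case
    by (simp add: differentiable_upto_Suc real_differentiable_iff_field_differentiable
        field_differentiable_inverse)
qed

lemma smooth_on_const: "smooth_on I (\<lambda>x. c)"
  unfolding smooth_on_iff_differentiable_upto using differentiable_upto_const by blast

lemma smooth_on_add: "open I \<Longrightarrow> smooth_on I f \<Longrightarrow> smooth_on I g \<Longrightarrow> smooth_on I (\<lambda>x. f x + g x)"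
  unfolding smooth_on_iff_differentiable_upto using differentiable_upto_add by blast

lemma smooth_on_mult: "open I \<Longrightarrow> smooth_on I f \<Longrightarrow> smooth_on I g \<Longrightarrow> smooth_on I (\<lambda>x. f x * g x)"
  unfolding smooth_on_iff_differentiable_upto using differentiable_upto_mult by blast

lemma smooth_on_inverse:
  "open I \<Longrightarrow> smooth_on I f \<Longrightarrow> \<forall>x\<in>I. f x \<noteq> 0 \<Longrightarrow> smooth_on I (\<lambda>x. inverse (f x))"
  unfolding smooth_on_iff_differentiable_upto using differentiable_upto_inverse by blast

lemma smooth_on_cmult: "open I \<Longrightarrow> smooth_on I f \<Longrightarrow> smooth_on I (\<lambda>x. c * f x)"
  using smooth_on_mult[OF _ smooth_on_const] by blast

lemma smooth_on_diff: "open I \<Longrightarrow> smooth_on I f \<Longrightarrow> smooth_on I g \<Longrightarrow> smooth_on I (\<lambda>x. f x - g x)"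
  using smooth_on_add[of I f "\<lambda>x. -1 * g x"] smooth_on_cmult[of I g "-1"] by simp

lemma smooth_on_divide:
  "open I \<Longrightarrow> smooth_on I f \<Longrightarrow> smooth_on I g \<Longrightarrow> \<forall>x\<in>I. g x \<noteq> 0 \<Longrightarrow> smooth_on I (\<lambda>x. f x / g x)"
  using smooth_on_mult[OF _ _ smooth_on_inverse, of I f g] by (simp add: divide_inverse)

lemma smooth_on_sum:
  assumes "open I" shows "finite S \<Longrightarrow> (\<And>i. i \<in> S \<Longrightarrow> smooth_on I (F i)) \<Longrightarrow> smooth_on I (\<lambda>x. \<Sum>i\<in>S. F i x)"
  by (induction S rule: finite_induct) (auto intro: smooth_on_const smooth_on_add[OF assms])

lemma smooth_on_prod:
  assumes "open I" shows "finite S \<Longrightarrow> (\<And>i. i \<in> S \<Longrightarrow> smooth_on I (F i)) \<Longrightarrow> smooth_on I (\<lambda>x. \<Prod>i\<in>S. F i x)"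
  by (induction S rule: finite_induct) (auto intro: smooth_on_const smooth_on_mult[OF assms])

lemma has_real_derivative_ln_abs:
  assumes "(f has_real_derivative f') (at x)" "f x \<noteq> 0"
  shows "((\<lambda>x. ln \<bar>f x\<bar>) has_real_derivative f' / f x) (at x)"
proof -
  have ln_abs: "ln \<bar>y\<bar> = ln (y\<^sup>2) / 2" for y :: real
    using ln_realpow[of "\<bar>y\<bar>" 2] by (cases "y = 0") simp_all
  have "0 < f x * f x"
    using assms(2) by (metis linorder_neq_iff mult_neg_neg mult_pos_pos)
  then have "((\<lambda>x. ln ((f x)\<^sup>2) / 2) has_real_derivative f' / f x) (at x)"
    using assms(1) by (auto intro!: derivative_eq_intros simp: field_simps power2_eq_square)
  then show ?thesis unfolding ln_abs .
qed

lemma binomial_sum_Suc: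
  fixes a b :: "nat \<Rightarrow> 'a :: comm_semiring_1"
  shows "(\<Sum>i\<le>n. of_nat (n choose i) * (a (Suc i) * b (n - i) + a i * b (Suc (n - i)))) =
    (\<Sum>i\<le>Suc n. of_nat (Suc n choose i) * a i * b (Suc n - i))"
proof -
  have "(\<Sum>i\<le>Suc n. of_nat (Suc n choose i) * a i * b (Suc n - i)) =
      a 0 * b (Suc n) + (\<Sum>i\<le>n. of_nat ((n choose i) + (n choose (Suc i))) * a (Suc i) * b (n - i))"
    unfolding sum.atMost_Suc_shift by simp
  moreover have "(\<Sum>i\<le>n. of_nat (n choose i) * a i * b (Suc (n - i))) =
      (\<Sum>i\<le>Suc n. of_nat (n choose i) * a i * b (Suc n - i))"
    by (simp add: Suc_diff_le binomial_eq_0)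
  moreover have "\<dots> = a 0 * b (Suc n) + (\<Sum>i\<le>n. of_nat (n choose (Suc i)) * a (Suc i) * b (n - i))"
    unfolding sum.atMost_Suc_shift by simp
  ultimately show ?thesis
    by (simp add: algebra_simps sum.distrib)
qed

lemma deriv_ln_abs:
  fixes f :: "real \<Rightarrow> real"
  shows "f differentiable at x \<Longrightarrow> f x \<noteq> 0 \<Longrightarrow> deriv (\<lambda>x. ln \<bar>f x\<bar>) x = deriv f x / f x"
  using has_real_derivative_ln_abs[of f "deriv f x" x] DERIV_deriv_iff_real_differentiable DERIV_imp_deriv
  by blast

lemma higher_deriv_mult_real:
  assumes "open I" "smooth_on I f" "smooth_on I g" "z \<in> I"
  shows "(deriv ^^ n) (\<lambda>w. f w * g w) z =
    (\<Sum>i\<le>n. of_nat (n choose i) * (deriv ^^ i) f z * (deriv ^^ (n - i)) g z)"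
  using assms(4)
proof (induction n arbitrary: z)
  case 0 then show ?case by simp
next
  case (Suc n)
  have diff: "(deriv ^^ k) h field_differentiable at z" if "smooth_on I h" for h k
    using smooth_on_field_differentiable[OF smooth_on_higher_deriv[OF that] Suc.prems] .
  have "(deriv ^^ Suc n) (\<lambda>w. f w * g w) z =
      deriv (\<lambda>w. \<Sum>i\<le>n. of_nat (n choose i) * (deriv ^^ i) f w * (deriv ^^ (n - i)) g w) z"
    unfolding funpow.simps(2) o_apply by (rule deriv_cong_open[OF assms(1) ballI[OF Suc.IH] Suc.prems])
  also have "\<dots> = (\<Sum>i\<le>n. of_nat (n choose i) *
      ((deriv ^^ Suc i) f z * (deriv ^^ (n - i)) g z + (deriv ^^ i) f z * (deriv ^^ Suc (n - i)) g z))"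
    using diff assms(2,3) by (simp add: field_differentiable_mult algebra_simps)
  also have "\<dots> = (\<Sum>i\<le>Suc n. of_nat (Suc n choose i) * (deriv ^^ i) f z * (deriv ^^ (Suc n - i)) g z)"
    by (rule binomial_sum_Suc[where a = "\<lambda>i. (deriv ^^ i) f z" and b = "\<lambda>i. (deriv ^^ i) g z"])
  finally show ?case .
qed

definition wronskian_mat :: "(real \<Rightarrow> real) list \<Rightarrow> real \<Rightarrow> real mat" where
  "wronskian_mat fs z = Matrix.mat (length fs) (length fs) (\<lambda>(i, j). (deriv ^^ i) (fs ! j) z)"

lemma Wr_eq_det: "Wr fs z = det (wronskian_mat fs z)"
  by (simp add: Wr_def wronskian_mat_def)

lemma wronskian_mat_carrier: "wronskian_mat fs z \<in> carrier_mat (length fs) (length fs)"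
  by (simp add: wronskian_mat_def)

lemma wronskian_mat_index:
  "i < length fs \<Longrightarrow> j < length fs \<Longrightarrow> wronskian_mat fs z $$ (i, j) = (deriv ^^ i) (fs ! j) z"
  by (simp add: wronskian_mat_def)

lemma Wr_cong_open:
  assumes "open I" "z \<in> I" "list_all2 (\<lambda>f g. \<forall>x\<in>I. f x = g x) fs gs"
  shows "Wr fs z = Wr gs z"
proof -
  have "wronskian_mat fs z = wronskian_mat gs z"
    using assms higher_deriv_cong_open[OF assms(1)]
    by (auto simp: wronskian_mat_def list_all2_conv_all_nth)
  then show ?thesis by (simp add: Wr_eq_det)
qed

lemma Wr_Nil: "Wr [] z = 1"
  using wronskian_mat_carrier[of "[]" z] by (simp add: Wr_eq_det)

lemma Wr_single: "Wr [f] z = f z"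
  using wronskian_mat_carrier[of "[f]" z] by (simp add: Wr_eq_det det_single wronskian_mat_index)

lemma Wr_two: "Wr [f, g] z = f z * deriv g z - g z * deriv f z"
proof -
  let ?A = "wronskian_mat [f, g] z"
  have A: "?A \<in> carrier_mat 2 2"
    using wronskian_mat_carrier[of "[f, g]" z] by (simp add: numeral_2_eq_2)
  have cofactor: "cofactor ?A 0 0 = deriv g z" "cofactor ?A (Suc 0) 0 = - g z"
    using A mat_delete_carrier[OF A, of 0 0] mat_delete_carrier[OF A, of 1 0]
    by (simp_all add: cofactor_def det_single mat_delete_def wronskian_mat_index)
  have "det ?A = ?A $$ (0, 0) * cofactor ?A 0 0 + ?A $$ (Suc 0, 0) * cofactor ?A (Suc 0) 0"
    using laplace_expansion_column[OF A, of 0] by (simp add: numeral_2_eq_2)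
  then show ?thesis by (simp add: Wr_eq_det cofactor wronskian_mat_index)
qed

lemma Wr_const_one_Cons: "Wr ((\<lambda>x. 1) # gs) z = Wr (map deriv gs) z"
proof -
  let ?A = "wronskian_mat ((\<lambda>x. 1) # gs) z"
  let ?n = "length gs"
  have A: "?A \<in> carrier_mat (Suc ?n) (Suc ?n)"
    using wronskian_mat_carrier[of "(\<lambda>x. 1) # gs" z] by simp
  have first_column: "?A $$ (Suc i, 0) = 0" if "i < ?n" for i
    using that by (simp add: wronskian_mat_index higher_deriv_const del: funpow.simps)
  have minor: "mat_delete ?A 0 0 = wronskian_mat (map deriv gs) z"
    using A wronskian_mat_carrier[of "map deriv gs" z]
    by (intro eq_matI) (auto simp: mat_delete_def wronskian_mat_index funpow_deriv_Suc simp del: funpow.simps)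
  have "det ?A = ?A $$ (0, 0) * cofactor ?A 0 0 + (\<Sum>i<?n. ?A $$ (Suc i, 0) * cofactor ?A (Suc i) 0)"
    using laplace_expansion_column[OF A, of 0] unfolding sum.lessThan_Suc_shift by simp
  moreover have "?A $$ (0, 0) = 1"
    by (simp add: wronskian_mat_index)
  ultimately show ?thesis
    by (simp add: Wr_eq_det first_column cofactor_def minor)
qed

lemma Wr_eq_sum_permutations:
  "Wr fs z = (\<Sum>p | p permutes {0..<length fs}. signof p * (\<Prod>i = 0..<length fs. (deriv ^^ i) (fs ! p i) z))"
  unfolding Wr_eq_det det_def'[OF wronskian_mat_carrier]
  by (intro sum.cong prod.cong) (auto simp: wronskian_mat_index permutes_in_image)

lemma smooth_on_Wr:
  assumes "open I" "\<forall>f\<in>set fs. smooth_on I f"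
  shows "smooth_on I (Wr fs)"
proof -
  have "smooth_on I (\<lambda>z. \<Prod>i = 0..<length fs. (deriv ^^ i) (fs ! p i) z)" if "p permutes {0..<length fs}" for p
    using assms permutes_in_image[OF that]
    by (intro smooth_on_prod) (auto intro: smooth_on_higher_deriv)
  then have "smooth_on I (\<lambda>z. \<Sum>p | p permutes {0..<length fs}.
      signof p * (\<Prod>i = 0..<length fs. (deriv ^^ i) (fs ! p i) z))"
    by (intro smooth_on_sum smooth_on_cmult assms(1)) (auto simp: finite_permutations)
  then show ?thesis by (simp add: Wr_eq_sum_permutations[abs_def])
qed

text \<open>The Wronskian matrix of \<open>h g\<^sub>1, \<dots>, h g\<^sub>n\<close> is, by the Leibniz rule, that of \<open>g\<^sub>1, \<dots>, g\<^sub>n\<close>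
  multiplied from the left by a lower triangular matrix with diagonal \<open>h\<close>.\<close>

lemma Wr_mult:
  assumes "open I" "z \<in> I" "smooth_on I h" "\<forall>g\<in>set gs. smooth_on I g"
  shows "Wr (map (\<lambda>g x. h x * g x) gs) z = h z ^ length gs * Wr gs z"
proof -
  define n where "n = length gs"
  define L where "L = Matrix.mat n n (\<lambda>(i, l). if l \<le> i then of_nat (i choose l) * (deriv ^^ (i - l)) h z else 0)"
  have L: "L \<in> carrier_mat n n" by (simp add: L_def)
  have G: "wronskian_mat gs z \<in> carrier_mat n n" using wronskian_mat_carrier n_def by simp
  have "wronskian_mat (map (\<lambda>g x. h x * g x) gs) z = L * wronskian_mat gs z"
  proof (rule eq_matI)
    fix i j assume "i < dim_row (L * wronskian_mat gs z)" "j < dim_col (L * wronskian_mat gs z)"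
    then have ij: "i < n" "j < n" using L G by auto
    have "(L * wronskian_mat gs z) $$ (i, j) = (\<Sum>l<n. L $$ (i, l) * wronskian_mat gs z $$ (l, j))"
      using ij L G by (simp add: scalar_prod_def atLeast0LessThan)
    also have "\<dots> = (\<Sum>l\<in>{l\<in>{..<n}. l \<le> i}. of_nat (i choose l) * (deriv ^^ (i - l)) h z * (deriv ^^ l) (gs ! j) z)"
      using ij by (subst sum.inter_filter) (auto simp: L_def wronskian_mat_index n_def intro: sum.cong)
    also have "{l\<in>{..<n}. l \<le> i} = {..i}" using ij by auto
    also have "(\<Sum>l\<le>i. of_nat (i choose l) * (deriv ^^ (i - l)) h z * (deriv ^^ l) (gs ! j) z) =
        (deriv ^^ i) (\<lambda>x. (gs ! j) x * h x) z"
      by (subst higher_deriv_mult_real[OF assms(1) _ assms(3,2)])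
        (use assms(4) ij n_def in \<open>auto simp: mult_ac\<close>)
    finally show "wronskian_mat (map (\<lambda>g x. h x * g x) gs) z $$ (i, j) = (L * wronskian_mat gs z) $$ (i, j)"
      using ij n_def by (simp add: wronskian_mat_index mult.commute)
  qed (use L n_def in \<open>auto simp: wronskian_mat_def\<close>)
  moreover have "det L = h z ^ n"
    using det_lower_triangular[OF _ L] L by (simp add: L_def prod_list_diag_prod)
  ultimately show ?thesis
    using det_mult[OF L G] by (simp add: Wr_eq_det n_def)
qed

definition darboux :: "(real \<Rightarrow> real) \<Rightarrow> (real \<Rightarrow> real) \<Rightarrow> real \<Rightarrow> real" where
  "darboux p h = (\<lambda>x. deriv h x - deriv p x / p x * h x)"

definition darboux_potential :: "(real \<Rightarrow> real) \<Rightarrow> (real \<Rightarrow> real) \<Rightarrow> real \<Rightarrow> real" where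
  "darboux_potential V p = (\<lambda>x. V x + 2 * deriv (deriv (\<lambda>x. ln \<bar>p x\<bar>)) x)"

lemma smooth_on_darboux:
  "open I \<Longrightarrow> smooth_on I p \<Longrightarrow> \<forall>x\<in>I. p x \<noteq> 0 \<Longrightarrow> smooth_on I h \<Longrightarrow> smooth_on I (darboux p h)"
  unfolding darboux_def by (intro smooth_on_diff smooth_on_mult smooth_on_divide smooth_on_deriv) auto

lemma darboux_self: "p x \<noteq> 0 \<Longrightarrow> darboux p p x = 0"
  by (simp add: darboux_def)

lemma darboux_cmult: "h differentiable at x \<Longrightarrow> darboux p (\<lambda>y. c * h y) x = c * darboux p h x"
  by (simp add: darboux_def real_differentiable_iff_field_differentiable algebra_simps)

lemma darboux_eq_Wr_divide: "darboux p h x = Wr [p, h] x / p x" if "p x \<noteq> 0"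
  using that by (simp add: darboux_def Wr_two field_simps)

text \<open>With \<open>q = g/p\<close> one has \<open>g = p q\<close> and \<open>darboux p g = p q'\<close>, so by \<open>Wr_mult\<close> both sides equal
  \<open>p\<^sup>n\<^sup>+\<^sup>1 Wr (q\<^sub>1', \<dots>, q\<^sub>n')\<close>.\<close>

lemma Wr_Cons_darboux:
  assumes I: "open I" "z \<in> I" and p: "smooth_on I p" "\<forall>x\<in>I. p x \<noteq> 0"
    and gs: "\<forall>g\<in>set gs. smooth_on I g"
  shows "Wr (p # gs) z = p z * Wr (map (darboux p) gs) z"
proof -
  define q where "q = map (\<lambda>g x. g x / p x) gs"
  have q: "\<forall>g\<in>set q. smooth_on I g"
    using gs smooth_on_divide[OF I(1) _ p] by (auto simp: q_def)
  have length_q: "length q = length gs" by (simp add: q_def)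
  have "Wr (p # gs) z = Wr (map (\<lambda>g x. p x * g x) ((\<lambda>x. 1) # q)) z"
    using p(2) by (intro Wr_cong_open[OF I]) (auto simp: q_def list_all2_conv_all_nth nth_Cons split: nat.split)
  also have "\<dots> = p z ^ Suc (length gs) * Wr (map deriv q) z"
    using Wr_mult[OF I p(1), of "(\<lambda>x. 1) # q"] q smooth_on_const
    by (simp add: Wr_const_one_Cons length_q)
  finally have "Wr (p # gs) z = p z * (p z ^ length gs * Wr (map deriv q) z)"
    by simp
  moreover have "Wr (map (darboux p) gs) z = Wr (map (\<lambda>g x. p x * g x) (map deriv q)) z"
  proof (intro Wr_cong_open[OF I])
    have "darboux p g x = p x * deriv (\<lambda>x. g x / p x) x" if "g \<in> set gs" "x \<in> I" for g x
      using that gs p smooth_on_field_differentiable[of I g x] smooth_on_field_differentiable[OF p(1) that(2)]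
      by (simp add: darboux_def field_simps power2_eq_square)
    then show "list_all2 (\<lambda>f g. \<forall>x\<in>I. f x = g x) (map (darboux p) gs) (map (\<lambda>g x. p x * g x) (map deriv q))"
      by (auto simp: q_def list_all2_conv_all_nth)
  qed
  moreover have "\<dots> = p z ^ length gs * Wr (map deriv q) z"
    using Wr_mult[OF I p(1), of "map deriv q"] q smooth_on_deriv
    by (simp add: length_q)
  ultimately show ?thesis by simp
qed

text \<open>The logarithmic derivative \<open>w = p'/p\<close> of a nonvanishing solution of \<open>p'' + V p = 0\<close> satisfies
  the Riccati equation \<open>w' = - V - w\<^sup>2\<close>; everything about the transformed operator
  \<open>d\<^sup>2/dx\<^sup>2 + V + 2 w'\<close> follows from it.\<close>

lemma riccati_log_deriv:
  assumes "open I" "x \<in> I" "smooth_on I p" "\<forall>y\<in>I. p y \<noteq> 0"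
    and "\<forall>y\<in>I. deriv (deriv p) y + V y * p y = 0"
  shows "deriv (\<lambda>y. deriv p y / p y) x = - V x - (deriv p x / p x)\<^sup>2"
proof -
  have "deriv (deriv p) x = - V x * p x"
    using assms(2,5) by (simp add: eq_neg_iff_add_eq_0)
  then show ?thesis
    using assms(2,4) smooth_on_field_differentiable[OF smooth_on_deriv[OF assms(3)] assms(2)]
      smooth_on_field_differentiable[OF assms(3,2)]
    by (simp add: field_simps power2_eq_square)
qed

lemma deriv2_ln_abs:
  assumes "open I" "x \<in> I" "smooth_on I p" "\<forall>y\<in>I. p y \<noteq> 0"
  shows "deriv (deriv (\<lambda>y. ln \<bar>p y\<bar>)) x = deriv (\<lambda>y. deriv p y / p y) x"
  using assms by (intro deriv_cong_open[OF assms(1) _ assms(2)]) (simp add: deriv_ln_abs smooth_on_differentiable)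

lemma darboux_intertwining:
  assumes I: "open I" "x \<in> I" and p: "smooth_on I p" "\<forall>y\<in>I. p y \<noteq> 0"
    and Hp: "\<forall>y\<in>I. deriv (deriv p) y + V y * p y = 0"
    and f: "smooth_on I f" and g: "smooth_on I g"
    and Hf: "\<forall>y\<in>I. deriv (deriv f) y + V y * f y = - g y"
  shows "deriv (deriv (darboux p f)) x + darboux_potential V p x * darboux p f x = - darboux p g x"
proof -
  define w where "w = (\<lambda>y. deriv p y / p y)"
  have w: "smooth_on I w"
    unfolding w_def by (rule smooth_on_divide[OF I(1) smooth_on_deriv[OF p(1)] p])
  have darboux_w: "darboux p h = (\<lambda>y. deriv h y - w y * h y)" for h
    by (simp add: darboux_def w_def)
  have riccati: "deriv w y = - V y - (w y)\<^sup>2" if "y \<in> I" for y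
    unfolding w_def using riccati_log_deriv[OF I(1) that p Hp] .
  have dA: "deriv (darboux p f) y = - g y - w y * darboux p f y" if y: "y \<in> I" for y
  proof -
    have "deriv (darboux p f) y = deriv (deriv f) y - (deriv w y * f y + w y * deriv f y)"
      using smooth_on_field_differentiable[OF smooth_on_deriv[OF f] y]
        smooth_on_field_differentiable[OF w y] smooth_on_field_differentiable[OF f y]
      by (simp add: darboux_w field_differentiable_mult)
    then show ?thesis
      using Hf riccati[OF y] y by (simp add: darboux_w algebra_simps power2_eq_square)
  qed
  have "deriv (deriv (darboux p f)) x = deriv (\<lambda>y. - g y - w y * darboux p f y) x"
    using dA by (intro deriv_cong_open[OF I(1) _ I(2)]) simp
  also have "\<dots> = - deriv g x - (deriv w x * darboux p f x + w x * deriv (darboux p f) x)"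
    using smooth_on_field_differentiable[OF g I(2)] smooth_on_field_differentiable[OF w I(2)]
      smooth_on_field_differentiable[OF smooth_on_darboux[OF I(1) p f] I(2)]
    by (simp add: field_differentiable_mult field_differentiable_minus)
  finally have A2: "deriv (deriv (darboux p f)) x =
      - deriv g x - (deriv w x * darboux p f x + w x * (- g x - w x * darboux p f x))"
    unfolding dA[OF I(2)] .
  have V1: "darboux_potential V p x = V x + 2 * deriv w x"
    using deriv2_ln_abs[OF I p] by (simp add: darboux_potential_def w_def)
  have Ag: "darboux p g x = deriv g x - w x * g x"
    by (simp add: darboux_w)
  show ?thesis
    unfolding A2 V1 Ag riccati[OF I(2)] by (simp add: algebra_simps power2_eq_square)
qed

lemma darboux_reciprocal:
  assumes I: "open I" "x \<in> I" and p: "smooth_on I p" "\<forall>y\<in>I. p y \<noteq> 0"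
    and Hp: "\<forall>y\<in>I. deriv (deriv p) y + V y * p y = 0"
  shows "deriv (deriv (\<lambda>y. 1 / p y)) x + darboux_potential V p x * (1 / p x) = 0"
proof -
  define w where "w = (\<lambda>y. deriv p y / p y)"
  have w: "smooth_on I w"
    unfolding w_def by (rule smooth_on_divide[OF I(1) smooth_on_deriv[OF p(1)] p])
  have u: "smooth_on I (\<lambda>y. 1 / p y)"
    by (rule smooth_on_divide[OF I(1) smooth_on_const p])
  have "deriv (\<lambda>y. 1 / p y) y = - w y * (1 / p y)" if y: "y \<in> I" for y
    using smooth_on_field_differentiable[OF p(1) y] p(2) y
    by (simp add: w_def field_simps power2_eq_square)
  then have "deriv (deriv (\<lambda>y. 1 / p y)) x = deriv (\<lambda>y. - w y * (1 / p y)) x"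
    by (intro deriv_cong_open[OF I(1) _ I(2)]) simp
  also have "\<dots> = - (deriv w x * (1 / p x) + w x * (- w x * (1 / p x)))"
    using smooth_on_field_differentiable[OF w I(2)] smooth_on_field_differentiable[OF u I(2)]
      smooth_on_field_differentiable[OF p(1) I(2)] p(2) I(2)
      \<open>\<And>y. y \<in> I \<Longrightarrow> deriv (\<lambda>y. 1 / p y) y = _\<close>[OF I(2)]
    by (simp add: field_differentiable_divide field_differentiable_minus field_simps power2_eq_square)
  finally have u2: "deriv (deriv (\<lambda>y. 1 / p y)) x = - (deriv w x * (1 / p x) + w x * (- w x * (1 / p x)))" .
  have V1: "darboux_potential V p x = V x + 2 * deriv w x"
    using deriv2_ln_abs[OF I p] by (simp add: darboux_potential_def w_def)
  show ?thesis
    unfolding u2 V1 w_def riccati_log_deriv[OF I p Hp] by (simp add: algebra_simps power2_eq_square)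
qed

lemma deriv_Wr_two:
  assumes "open I" "x \<in> I" "smooth_on I f" "smooth_on I g"
  shows "deriv (Wr [f, g]) x = f x * deriv (deriv g) x - g x * deriv (deriv f) x"
  using assms smooth_on_field_differentiable[OF smooth_on_deriv[OF assms(3)] assms(2)]
    smooth_on_field_differentiable[OF smooth_on_deriv[OF assms(4)] assms(2)]
    smooth_on_field_differentiable[OF assms(3,2)] smooth_on_field_differentiable[OF assms(4,2)]
  by (simp add: Wr_two[abs_def] field_differentiable_mult)

lemma darboux_potential_mult:
  assumes I: "open I" "x \<in> I" and p: "smooth_on I p" "\<forall>y\<in>I. p y \<noteq> 0"
    and q: "smooth_on I q" "\<forall>y\<in>I. q y \<noteq> 0" and f: "\<forall>y\<in>I. f y = p y * q y"
  shows "darboux_potential V f x = darboux_potential (darboux_potential V p) q x"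
proof -
  have f_smooth: "smooth_on I f"
    using smooth_on_cong[OF I(1) _ smooth_on_mult[OF I(1) p(1) q(1)]] f by simp
  have "deriv f y / f y = deriv p y / p y + deriv q y / q y" if y: "y \<in> I" for y
  proof -
    have "deriv f y = deriv (\<lambda>y. p y * q y) y"
      by (rule deriv_cong_open[OF I(1) f y])
    then show ?thesis
      using y f p(2) q(2) smooth_on_field_differentiable[OF p(1) y] smooth_on_field_differentiable[OF q(1) y]
      by (simp add: field_simps)
  qed
  then have "deriv (\<lambda>y. deriv f y / f y) x = deriv (\<lambda>y. deriv p y / p y + deriv q y / q y) x"
    by (intro deriv_cong_open[OF I(1) _ I(2)]) simp
  also have "\<dots> = deriv (\<lambda>y. deriv p y / p y) x + deriv (\<lambda>y. deriv q y / q y) x"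
    using smooth_on_field_differentiable[OF smooth_on_divide[OF I(1) smooth_on_deriv[OF p(1)] p] I(2)]
      smooth_on_field_differentiable[OF smooth_on_divide[OF I(1) smooth_on_deriv[OF q(1)] q] I(2)]
    by simp
  finally show ?thesis
    using deriv2_ln_abs[OF I f_smooth] deriv2_ln_abs[OF I p] deriv2_ln_abs[OF I q] f p(2) q(2)
    by (simp add: darboux_potential_def)
qed

lemma deriv_mult_cross:
  fixes p a b :: "real \<Rightarrow> real"
  assumes "p field_differentiable at x" "a field_differentiable at x" "b field_differentiable at x"
  shows "deriv (\<lambda>y. p y * a y) x * (p x * b x) - p x * a x * deriv (\<lambda>y. p y * b y) x =
    (p x)\<^sup>2 * (deriv a x * b x - a x * deriv b x)"
  using assms by (simp add: algebra_simps power2_eq_square)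

lemma Wr_two_quotients:
  fixes a b c :: "real \<Rightarrow> real"
  assumes "a field_differentiable at x" "b field_differentiable at x" "c field_differentiable at x"
    and "a x \<noteq> 0"
  shows "Wr [\<lambda>y. b y / a y, \<lambda>y. c y / a y] x = (deriv c x * b x - c x * deriv b x) / (a x)\<^sup>2"
  using assms by (simp add: Wr_two field_simps power2_eq_square)

definition crum_theta :: "(nat \<Rightarrow> real \<Rightarrow> real) \<Rightarrow> nat \<Rightarrow> real \<Rightarrow> real" where
  "crum_theta \<psi> j = Wr (map \<psi> [1..<j+1])"

lemma crum_theta_0: "crum_theta \<psi> 0 = (\<lambda>z. 1)"
  by (simp add: crum_theta_def Wr_Nil fun_eq_iff)

lemma crum_theta_1: "crum_theta \<psi> 1 = \<psi> 1"
  by (simp add: crum_theta_def Wr_single fun_eq_iff)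

lemma crum_theta_2: "crum_theta \<psi> 2 = Wr [\<psi> 1, \<psi> 2]"
  by (simp add: crum_theta_def numeral_2_eq_2 fun_eq_iff)

locale crum_chain =
  fixes I :: "real set" and V :: "real \<Rightarrow> real" and \<psi> :: "nat \<Rightarrow> real \<Rightarrow> real"
    and C :: "nat \<Rightarrow> real" and N :: nat
  assumes open_domain: "open I"
    and smooth: "\<And>j. 1 \<le> j \<Longrightarrow> j \<le> N + 1 \<Longrightarrow> smooth_on I (\<psi> j)"
    and ground_state: "\<And>z. z \<in> I \<Longrightarrow> deriv (deriv (\<psi> 1)) z + V z * \<psi> 1 z = 0"
    and excited: "\<And>j z. 1 \<le> j \<Longrightarrow> j \<le> N \<Longrightarrow> z \<in> I \<Longrightarrow>
      deriv (deriv (\<psi> (j + 1))) z + V z * \<psi> (j + 1) z = - C j * \<psi> j z"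
    and theta_nonzero: "\<And>j z. 1 \<le> j \<Longrightarrow> j \<le> N + 1 \<Longrightarrow> z \<in> I \<Longrightarrow> crum_theta \<psi> j z \<noteq> 0"

definition crum_identities ::
    "real set \<Rightarrow> (real \<Rightarrow> real) \<Rightarrow> (nat \<Rightarrow> real \<Rightarrow> real) \<Rightarrow> (nat \<Rightarrow> real) \<Rightarrow> nat \<Rightarrow> bool" where
  "crum_identities I V \<psi> C n \<longleftrightarrow> (\<forall>z\<in>I.
     deriv (deriv (\<lambda>y. crum_theta \<psi> (n + 1) y / crum_theta \<psi> n y)) z
       + darboux_potential V (crum_theta \<psi> n) z * (crum_theta \<psi> (n + 1) z / crum_theta \<psi> n z) = 0 \<and>
     deriv (deriv (\<lambda>y. crum_theta \<psi> (n - 1) y / crum_theta \<psi> n y)) z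
       + darboux_potential V (crum_theta \<psi> n) z * (crum_theta \<psi> (n - 1) z / crum_theta \<psi> n z) = 0 \<and>
     deriv (crum_theta \<psi> (n - 1)) z * crum_theta \<psi> (n + 1) z
       - crum_theta \<psi> (n - 1) z * deriv (crum_theta \<psi> (n + 1)) z = C n * (crum_theta \<psi> n z)\<^sup>2)"

context crum_chain
begin

lemma psi1_smooth: "smooth_on I (\<psi> 1)"
  using smooth[of 1] by simp

lemma psi1_nonzero: "\<forall>z\<in>I. \<psi> 1 z \<noteq> 0"
  using theta_nonzero[of 1] crum_theta_1[of \<psi>] by simp

lemma theta_smooth: "j \<le> N + 1 \<Longrightarrow> smooth_on I (crum_theta \<psi> j)"
  unfolding crum_theta_def by (intro smooth_on_Wr open_domain) (auto intro: smooth)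

lemma theta_Suc:
  assumes "j \<le> N" "z \<in> I"
  shows "crum_theta \<psi> (Suc j) z = \<psi> 1 z * crum_theta (\<lambda>k. darboux (\<psi> 1) (\<psi> (Suc k))) j z"
proof -
  have "map \<psi> [1..<Suc j + 1] = \<psi> 1 # map \<psi> (map Suc [1..<j + 1])"
    by (simp add: upt_conv_Cons map_Suc_upt del: upt_Suc)
  then show ?thesis
    using Wr_Cons_darboux[OF open_domain assms(2) psi1_smooth psi1_nonzero, of "map \<psi> (map Suc [1..<j + 1])"]
      smooth assms(1)
    by (auto simp: crum_theta_def comp_def)
qed

lemma darboux_excited:
  assumes "1 \<le> j" "j \<le> N" "z \<in> I"
  shows "deriv (deriv (darboux (\<psi> 1) (\<psi> (j + 1)))) z
    + darboux_potential V (\<psi> 1) z * darboux (\<psi> 1) (\<psi> (j + 1)) z = - C j * darboux (\<psi> 1) (\<psi> j) z"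
proof -
  have "deriv (deriv (darboux (\<psi> 1) (\<psi> (j + 1)))) z
      + darboux_potential V (\<psi> 1) z * darboux (\<psi> 1) (\<psi> (j + 1)) z
      = - darboux (\<psi> 1) (\<lambda>y. C j * \<psi> j y) z"
    using assms excited smooth ground_state
    by (intro darboux_intertwining[OF open_domain assms(3) psi1_smooth psi1_nonzero]
        smooth_on_cmult[OF open_domain]) auto
  then show ?thesis
    using darboux_cmult[OF smooth_on_differentiable[OF smooth assms(3)]] assms by simp
qed

lemma darboux_chain:
  assumes "1 \<le> N"
  shows "crum_chain I (darboux_potential V (\<psi> 1)) (\<lambda>k. darboux (\<psi> 1) (\<psi> (Suc k))) (\<lambda>k. C (Suc k)) (N - 1)"
proof
  show "smooth_on I (darboux (\<psi> 1) (\<psi> (Suc j)))" if "1 \<le> j" "j \<le> N - 1 + 1" for j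
    using that assms smooth by (intro smooth_on_darboux[OF open_domain psi1_smooth psi1_nonzero]) auto
  show "deriv (deriv (darboux (\<psi> 1) (\<psi> (Suc 1)))) z
      + darboux_potential V (\<psi> 1) z * darboux (\<psi> 1) (\<psi> (Suc 1)) z = 0" if "z \<in> I" for z
    using darboux_excited[of 1 z] darboux_self psi1_nonzero assms that by simp
  show "deriv (deriv (darboux (\<psi> 1) (\<psi> (Suc (j + 1))))) z
      + darboux_potential V (\<psi> 1) z * darboux (\<psi> 1) (\<psi> (Suc (j + 1))) z
      = - C (Suc j) * darboux (\<psi> 1) (\<psi> (Suc j)) z"
    if "1 \<le> j" "j \<le> N - 1" "z \<in> I" for j z
    using darboux_excited[of "Suc j" z] that by simp
  show "crum_theta (\<lambda>k. darboux (\<psi> 1) (\<psi> (Suc k))) j z \<noteq> 0"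
    if "1 \<le> j" "j \<le> N - 1 + 1" "z \<in> I" for j z
    using theta_Suc[of j z] theta_nonzero[of "Suc j" z] that assms by simp
qed (rule open_domain)

lemma crum_identities_1:
  assumes "1 \<le> N"
  shows "crum_identities I V \<psi> C 1"
  unfolding crum_identities_def
proof (intro ballI conjI)
  fix z assume z: "z \<in> I"
  have s2: "smooth_on I (\<psi> 2)"
    using smooth[of 2] assms by simp
  have ratio: "\<forall>y\<in>I. crum_theta \<psi> (1 + 1) y / crum_theta \<psi> 1 y = darboux (\<psi> 1) (\<psi> (1 + 1)) y"
    using psi1_nonzero unfolding one_add_one crum_theta_1 crum_theta_2 by (simp add: darboux_eq_Wr_divide)
  have "darboux_potential V (\<psi> 1) z * darboux (\<psi> 1) (\<psi> (1 + 1)) z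
      + deriv (deriv (darboux (\<psi> 1) (\<psi> (1 + 1)))) z = 0"
    using darboux_excited[of 1 z] darboux_self psi1_nonzero assms z by simp
  then show "deriv (deriv (\<lambda>z. crum_theta \<psi> (1 + 1) z / crum_theta \<psi> 1 z)) z
      + darboux_potential V (crum_theta \<psi> 1) z * (crum_theta \<psi> (1 + 1) z / crum_theta \<psi> 1 z) = 0"
    using crum_theta_1[of \<psi>]
    unfolding deriv2_cong_open[OF open_domain ratio z] ratio[rule_format, OF z]
    by (simp add: algebra_simps)
  show "deriv (deriv (\<lambda>z. crum_theta \<psi> (1 - 1) z / crum_theta \<psi> 1 z)) z
      + darboux_potential V (crum_theta \<psi> 1) z * (crum_theta \<psi> (1 - 1) z / crum_theta \<psi> 1 z) = 0"
    using darboux_reciprocal[OF open_domain z psi1_smooth psi1_nonzero] ground_state crum_theta_1[of \<psi>]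
    by (simp add: crum_theta_0)
  show "deriv (crum_theta \<psi> (1 - 1)) z * crum_theta \<psi> (1 + 1) z
      - crum_theta \<psi> (1 - 1) z * deriv (crum_theta \<psi> (1 + 1)) z = C 1 * (crum_theta \<psi> 1 z)\<^sup>2"
  proof -
    have d1: "deriv (deriv (\<psi> 1)) z = - V z * \<psi> 1 z"
      using ground_state[OF z] by (simp add: eq_neg_iff_add_eq_0)
    have d2: "deriv (deriv (\<psi> 2)) z = - V z * \<psi> 2 z - C 1 * \<psi> 1 z"
      using excited[of 1 z, unfolded one_add_one] assms z by (simp add: algebra_simps)
    show ?thesis
      unfolding one_add_one diff_self_eq_0 crum_theta_0 crum_theta_1 crum_theta_2
        deriv_Wr_two[OF open_domain z psi1_smooth s2] d1 d2
      by (simp add: algebra_simps power2_eq_square)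
  qed
qed

lemma crum_identities_Suc:
  assumes n: "1 \<le> n" "Suc n \<le> N"
    and IH: "crum_identities I (darboux_potential V (\<psi> 1)) (\<lambda>k. darboux (\<psi> 1) (\<psi> (Suc k)))
      (\<lambda>k. C (Suc k)) n"
  shows "crum_identities I V \<psi> C (Suc n)"
proof -
  interpret transformed: crum_chain I "darboux_potential V (\<psi> 1)" "\<lambda>k. darboux (\<psi> 1) (\<psi> (Suc k))"
      "\<lambda>k. C (Suc k)" "N - 1"
    using darboux_chain n by simp
  let ?S = "crum_theta (\<lambda>k. darboux (\<psi> 1) (\<psi> (Suc k)))"
  let ?T = "crum_theta \<psi>"
  have T: "\<forall>y\<in>I. ?T (Suc k) y = \<psi> 1 y * ?S k y" if "k \<le> N" for k
    using theta_Suc that by blast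
  have S_smooth: "smooth_on I (?S k)" if "k \<le> N" for k
    using transformed.theta_smooth that n by simp
  have S_nonzero: "\<forall>y\<in>I. ?S n y \<noteq> 0"
    using transformed.theta_nonzero n by simp
  have up: "\<forall>y\<in>I. ?T (Suc n + 1) y / ?T (Suc n) y = ?S (n + 1) y / ?S n y"
    using T[of n] T[of "Suc n"] n psi1_nonzero by simp
  have down: "\<forall>y\<in>I. ?T (Suc n - 1) y / ?T (Suc n) y = ?S (n - 1) y / ?S n y"
    using T[of "n - 1"] T[of n] n psi1_nonzero by (simp add: Suc_diff_le)
  show ?thesis
    unfolding crum_identities_def
  proof (intro ballI conjI)
    fix z assume z: "z \<in> I"
    have pot: "darboux_potential V (?T (Suc n)) z = darboux_potential (darboux_potential V (\<psi> 1)) (?S n) z"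
      using T[of n] n
      by (intro darboux_potential_mult[OF open_domain z psi1_smooth psi1_nonzero S_smooth S_nonzero]) auto
    note IH' = IH[unfolded crum_identities_def, rule_format, OF z]
    show "deriv (deriv (\<lambda>z. ?T (Suc n + 1) z / ?T (Suc n) z)) z
        + darboux_potential V (?T (Suc n)) z * (?T (Suc n + 1) z / ?T (Suc n) z) = 0"
      unfolding deriv2_cong_open[OF open_domain up z] up[rule_format, OF z] pot
      using IH' by simp
    show "deriv (deriv (\<lambda>z. ?T (Suc n - 1) z / ?T (Suc n) z)) z
        + darboux_potential V (?T (Suc n)) z * (?T (Suc n - 1) z / ?T (Suc n) z) = 0"
      unfolding deriv2_cong_open[OF open_domain down z] down[rule_format, OF z] pot
      using IH' by simp
    have "deriv (?T (Suc n - 1)) z = deriv (\<lambda>y. \<psi> 1 y * ?S (n - 1) y) z"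
      using T[of "n - 1"] n by (intro deriv_cong_open[OF open_domain _ z]) (simp add: Suc_diff_le)
    moreover have "deriv (?T (Suc n + 1)) z = deriv (\<lambda>y. \<psi> 1 y * ?S (n + 1) y) z"
      using T[of "Suc n"] n by (intro deriv_cong_open[OF open_domain _ z]) simp
    ultimately show "deriv (?T (Suc n - 1)) z * ?T (Suc n + 1) z - ?T (Suc n - 1) z * deriv (?T (Suc n + 1)) z
        = C (Suc n) * (?T (Suc n) z)\<^sup>2"
      using deriv_mult_cross[OF smooth_on_field_differentiable[OF psi1_smooth z]
          smooth_on_field_differentiable[OF S_smooth z] smooth_on_field_differentiable[OF S_smooth z],
          of "n - 1" "n + 1"]
        IH' T[of "n - 1"] T[of n] T[of "Suc n"] n z
      by (simp add: Suc_diff_le power_mult_distrib)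
  qed
qed

end

lemma crum_chain_identities:
  "crum_chain I V \<psi> C N \<Longrightarrow> 1 \<le> n \<Longrightarrow> n \<le> N \<Longrightarrow> crum_identities I V \<psi> C n"
proof (induction n arbitrary: V \<psi> C N)
  case 0
  then show ?case by simp
next
  case (Suc n)
  then interpret crum_chain I V \<psi> C N by simp
  show ?case
  proof (cases "n = 0")
    case True
    with Suc.prems show ?thesis using crum_identities_1 by simp
  next
    case False
    with Suc.prems show ?thesis
      using Suc.IH[OF darboux_chain] crum_identities_Suc by simp
  qed
qed

theorem mainTheorem14:
  fixes I :: "real set" and V0 :: "real \<Rightarrow> real" and \<psi> :: "nat \<Rightarrow> real \<Rightarrow> real"
    and C :: "nat \<Rightarrow> real" and N :: nat and \<theta> :: "nat \<Rightarrow> real \<Rightarrow> real"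
  assumes I: "is_interval I" "open I"
    and V0: "smooth_on I V0"
    and \<psi>_smooth: "\<And>j. 1 \<le> j \<Longrightarrow> j \<le> N + 1 \<Longrightarrow> smooth_on I (\<psi> j)"
    and H1: "\<And>z. z \<in> I \<Longrightarrow> - (deriv (deriv (\<psi> 1)) z + V0 z * \<psi> 1 z) = 0"
    and Hj: "\<And>j z. 1 \<le> j \<Longrightarrow> j \<le> N \<Longrightarrow> z \<in> I \<Longrightarrow>
               - (deriv (deriv (\<psi> (j+1))) z + V0 z * \<psi> (j+1) z) = C j * \<psi> j z"
    and C: "\<And>j. 1 \<le> j \<Longrightarrow> j \<le> N \<Longrightarrow> C j \<noteq> 0"
    and \<theta>_def: "\<And>j. \<theta> j = Wr (map \<psi> [1..<j+1])"
    and \<theta>_nz: "\<And>j z. 1 \<le> j \<Longrightarrow> j \<le> N + 1 \<Longrightarrow> z \<in> I \<Longrightarrow> \<theta> j z \<noteq> 0"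
    and n: "1 \<le> n" "n \<le> N"
  shows "let V = (\<lambda>z. V0 z + 2 * deriv (deriv (\<lambda>x. ln \<bar>\<theta> n x\<bar>)) z);
             \<phi> = (\<lambda>z. \<theta> (n+1) z / \<theta> n z);
             \<phi>inv = (\<lambda>z. \<theta> (n-1) z / \<theta> n z)
         in (\<forall>z\<in>I. deriv (deriv \<phi>) z + V z * \<phi> z = 0)
          \<and> (\<forall>z\<in>I. deriv (deriv \<phi>inv) z + V z * \<phi>inv z = 0)
          \<and> (\<forall>z\<in>I. Wr [\<phi>, \<phi>inv] z = C n)
          \<and> (\<forall>z\<in>I. deriv (\<theta> (n-1)) z * \<theta> (n+1) z - \<theta> (n-1) z * deriv (\<theta> (n+1)) z
                    = C n * (\<theta> n z)^2)"
proof -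
  have theta: "\<theta> = crum_theta \<psi>"
    by (simp add: fun_eq_iff \<theta>_def crum_theta_def)
  have chain: "crum_chain I V0 \<psi> C N"
  proof
    show "deriv (deriv (\<psi> 1)) z + V0 z * \<psi> 1 z = 0" if "z \<in> I" for z
      using H1[OF that] by simp
    show "deriv (deriv (\<psi> (j + 1))) z + V0 z * \<psi> (j + 1) z = - C j * \<psi> j z"
      if "1 \<le> j" "j \<le> N" "z \<in> I" for j z
      using Hj[OF that] by linarith
  qed (use I(2) \<psi>_smooth \<theta>_nz theta in auto)
  then have ids: "crum_identities I V0 \<psi> C n"
    using crum_chain_identities n by blast
  have cross: "\<forall>z\<in>I. deriv (\<theta> (n - 1)) z * \<theta> (n + 1) z - \<theta> (n - 1) z * deriv (\<theta> (n + 1)) z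
      = C n * (\<theta> n z)\<^sup>2"
    using ids by (simp add: crum_identities_def theta)
  have "Wr [\<lambda>z. \<theta> (n + 1) z / \<theta> n z, \<lambda>z. \<theta> (n - 1) z / \<theta> n z] z = C n" if z: "z \<in> I" for z
  proof -
    have "\<theta> j field_differentiable at z" if "j \<le> N + 1" for j
      using smooth_on_field_differentiable[OF crum_chain.theta_smooth[OF chain that] z] theta by simp
    then show ?thesis
      using Wr_two_quotients cross z \<theta>_nz[OF n(1) _ z] n by simp
  qed
  then show ?thesis
    using ids by (simp add: Let_def crum_identities_def darboux_potential_def theta)
qed

end
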